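(* Let $A\in\mathbb{R}^{n\times n}$, $T>0$, $\Omega=c+G\mathbf{B}_p\in\mathbb{A}_n$, $\epsilon\in[0,1)$, and $t\in[0,T]$ with $t\|A\|\le1$. Then $$\mathfrak{d}\bigl(\mathcal{H}(t,\Omega,\epsilon),\mathrm{e}^{tA}\Omega\bigr)\le\bigl(2(1-\epsilon)+(t\|A\|)^2\bigr)\mathrm{e}^{T\|A\|}\|\Omega\|.$$
   Context: A norm $\|\cdot\|$ is fixed on each $\mathbb{R}^k$, $\mathbf{B}_k$ its closed unit ball, matrices with induced norms; for a nonempty set $M$, $\|M\|=\sup_{x\in M}\|x\|$. $\mathfrak{d}$ is the Hausdorff distance w.r.t. $\|\cdot\|$. $G^\dagger$ is the Moore–Penrose inverse, $\rho(A)$ the spectral radius. $\mathbb{A}_n$: sets $c+G\mathbf{B}_p$ with $\mathrm{rank}(G)=n$, $G\in\mathbb{R}^{n\times p}$, regarded with representation $(c,G)$. $\mathcal{L}(t,k)=\sum_{j=0}^{k-1}(tA)^j/j!$, $\theta(r,k)=\sum_{j=k}^\infty r^j/j!$, $\lambda(t,\Omega,k)=\dfrac{1-\mathrm{e}^{t\|A\|}\theta(t\|A\|,k)\|G^\dagger\|\|c\|}{1+\mathrm{e}^{t\|A\|}\theta(t\|A\|,k)\|G^\dagger\|\|G\|}$, $k_{\min}(t)=\min\{k\in\mathbb{N}:\theta(t\rho(A),k)\mathrm{e}^{t\rho(A)}<1\}$, $\kappa(t,\Omega,\epsilon)=\min\{k\in\mathbb{N}:k\ge\max(k_{\min}(t),2),\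 \lambda(t,\Omega,k)>\epsilon\}$, and $\mathcal{H}(t,\Omega,\epsilon)=\mathcal{L}(t,\kappa)[c+\lambda(t,\Omega,\kappa)G\mathbf{B}_p]$ with $\kappa=\kappa(t,\Omega,\epsilon)$. *)

theory Defs
  imports "HOL-Analysis.Analysis"
begin

text \<open>A norm on a real vector space, given as a function (the paper fixes an
arbitrary norm on each R^k).\<close>
definition is_norm :: "('a::real_vector \<Rightarrow> real) \<Rightarrow> bool" where
  "is_norm N \<longleftrightarrow> (\<forall>x. N x = 0 \<longleftrightarrow> x = 0) \<and> (\<forall>a x. N (a *\<^sub>R x) = \<bar>a\<bar> * N x)
     \<and> (\<forall>x y. N (x + y) \<le> N x + N y)"

definition ind_norm :: "(real^'q \<Rightarrow> real) \<Rightarrow> (real^'m \<Rightarrow> real) \<Rightarrow> real^'q^'m \<Rightarrow> real" where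
  "ind_norm Nq Nm M = (SUP x\<in>{x. Nq x \<le> 1}. Nm (M *v x))"

definition set_norm :: "('a \<Rightarrow> real) \<Rightarrow> 'a set \<Rightarrow> real" where
  "set_norm N M = (SUP x\<in>M. N x)"

definition hdist :: "('a::real_vector \<Rightarrow> real) \<Rightarrow> 'a set \<Rightarrow> 'a set \<Rightarrow> real" where
  "hdist N X Y = max (SUP x\<in>X. INF y\<in>Y. N (x - y)) (SUP y\<in>Y. INF x\<in>X. N (x - y))"

definition unit_ball :: "('a \<Rightarrow> real) \<Rightarrow> 'a set" where
  "unit_ball N = {x. N x \<le> 1}"

primrec matpow :: "real^'n^'n \<Rightarrow> nat \<Rightarrow> real^'n^'n" where
  "matpow M 0 = mat 1"
| "matpow M (Suc j) = M ** matpow M j"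

definition mexp :: "real^'n^'n \<Rightarrow> real^'n^'n" where
  "mexp M = (\<Sum>j. (1 / fact j) *\<^sub>R matpow M j)"

definition mp_inverse :: "real^'p^'n \<Rightarrow> real^'n^'p" where
  "mp_inverse G = (THE X. G ** X ** G = G \<and> X ** G ** X = X \<and>
      transpose (G ** X) = G ** X \<and> transpose (X ** G) = X ** G)"

definition spectral_radius :: "real^'n^'n \<Rightarrow> real" where
  "spectral_radius A = Sup {cmod z | z. \<exists>v :: complex^'n. v \<noteq> 0 \<and>
      (\<chi> i j. complex_of_real (A $ i $ j)) *v v = z *s v}"

definition Lpoly :: "real^'n^'n \<Rightarrow> real \<Rightarrow> nat \<Rightarrow> real^'n^'n" where
  "Lpoly A t k = (\<Sum>j<k. (1 / fact j) *\<^sub>R matpow (t *\<^sub>R A) j)"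

definition theta :: "real \<Rightarrow> nat \<Rightarrow> real" where
  "theta r k = (\<Sum>j. r ^ (j + k) / fact (j + k))"

definition lam :: "(real^'n \<Rightarrow> real) \<Rightarrow> (real^'p \<Rightarrow> real) \<Rightarrow> real^'n^'n \<Rightarrow> real
                   \<Rightarrow> real^'n \<Rightarrow> real^'p^'n \<Rightarrow> nat \<Rightarrow> real" where
  "lam Nn Np A t c G k =
     (let a = ind_norm Nn Nn A; e = exp (t * a) * theta (t * a) k;
          gd = ind_norm Nn Np (mp_inverse G)
      in (1 - e * gd * Nn c) / (1 + e * gd * ind_norm Np Nn G))"

definition kmin :: "real^'n^'n \<Rightarrow> real \<Rightarrow> nat" where
  "kmin A t = (LEAST k. theta (t * spectral_radius A) k * exp (t * spectral_radius A) < 1)"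

definition kappa :: "(real^'n \<Rightarrow> real) \<Rightarrow> (real^'p \<Rightarrow> real) \<Rightarrow> real^'n^'n \<Rightarrow> real
                   \<Rightarrow> real^'n \<Rightarrow> real^'p^'n \<Rightarrow> real \<Rightarrow> nat" where
  "kappa Nn Np A t c G \<epsilon> =
     (LEAST k. k \<ge> max (kmin A t) 2 \<and> lam Nn Np A t c G k > \<epsilon>)"

definition Hset :: "(real^'n \<Rightarrow> real) \<Rightarrow> (real^'p \<Rightarrow> real) \<Rightarrow> real^'n^'n \<Rightarrow> real
                   \<Rightarrow> real^'n \<Rightarrow> real^'p^'n \<Rightarrow> real \<Rightarrow> (real^'n) set" where
  "Hset Nn Np A t c G \<epsilon> =
     (let k = kappa Nn Np A t c G \<epsilon>
      in (\<lambda>u. Lpoly A t k *v (c + lam Nn Np A t c G k *\<^sub>R (G *v u))) ` unit_ball Np)"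

end

(*
  The truncation L of the exponential series at order k >= 2 differs from exp(tA) by the tail
  theta(t|A|, k) of the scalar exponential series, which is at most (t|A|)^2 exp(t|A|) when
  t|A| <= 1, and kappa is chosen so that the shrinking factor lambda lies in (eps, 1].
  Pairing L(c + lambda G u) with exp(tA)(c + lambda G u), respectively exp(tA)(c + G u) with
  L(c + lambda G u), puts every point of one set within
  (t|A|)^2 exp(t|A|) |Omega| + 2 (1 - lambda) exp(t|A|) |Omega| of the other, since
  |c + lambda G u| <= |Omega| by convexity and |G u| <= 2 |Omega|.
  As the norms are arbitrary, convergence of the matrix series goes through their equivalence
  with the Euclidean norm.
*)
theory Submission
  imports Defs
begin

lemma is_norm_eq_0_iff: "is_norm N \<Longrightarrow> N x = 0 \<longleftrightarrow> x = 0"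
  unfolding is_norm_def by blast

lemma is_norm_zero: "is_norm N \<Longrightarrow> N 0 = 0"
  unfolding is_norm_def by blast

lemma is_norm_scaleR: "is_norm N \<Longrightarrow> N (a *\<^sub>R x) = \<bar>a\<bar> * N x"
  unfolding is_norm_def by blast

lemma is_norm_triangle: "is_norm N \<Longrightarrow> N (x + y) \<le> N x + N y"
  unfolding is_norm_def by blast

lemma is_norm_minus: "is_norm N \<Longrightarrow> N (- x) = N x"
  using is_norm_scaleR[of N "-1" x] by simp

lemma is_norm_nonneg:
  assumes "is_norm N"
  shows "0 \<le> N x"
proof -
  have "N (x + - x) \<le> N x + N (- x)" by (rule is_norm_triangle[OF assms])
  then show ?thesis using is_norm_zero[OF assms] is_norm_minus[OF assms, of x] by simp
qed

lemma is_norm_diff_le: "is_norm N \<Longrightarrow> N (x - y) \<le> N x + N y"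
  using is_norm_triangle[of N x "- y"] is_norm_minus[of N y] by simp

lemma is_norm_reverse_triangle:
  assumes "is_norm N"
  shows "\<bar>N x - N y\<bar> \<le> N (x - y)"
  using is_norm_triangle[OF assms, of "x - y" y] is_norm_triangle[OF assms, of "y - x" x]
    is_norm_minus[OF assms, of "x - y"] by simp

lemma is_norm_sum_le: "is_norm N \<Longrightarrow> N (sum f S) \<le> (\<Sum>i\<in>S. N (f i))"
proof (induction S rule: infinite_finite_induct)
  case (insert x F)
  then show ?case using is_norm_triangle[OF insert(4), of "f x" "sum f F"] by simp
qed (simp_all add: is_norm_zero)

subsection \<open>Equivalence with the Euclidean norm\<close>

lemma is_norm_le_norm:
  fixes N :: "'a::euclidean_space \<Rightarrow> real"
  assumes N: "is_norm N"
  obtains C where "C > 0" "\<And>x. N x \<le> C * norm x"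
proof
  define C where "C = 1 + (\<Sum>b\<in>Basis. N b)"
  have "(\<Sum>b\<in>Basis. N b) \<ge> 0" by (intro sum_nonneg is_norm_nonneg[OF N])
  then show "C > 0" unfolding C_def by simp
  fix x :: 'a
  have "N x = N (\<Sum>b\<in>Basis. (x \<bullet> b) *\<^sub>R b)" by (simp add: euclidean_representation)
  also have "\<dots> \<le> (\<Sum>b\<in>Basis. N ((x \<bullet> b) *\<^sub>R b))" by (rule is_norm_sum_le[OF N])
  also have "\<dots> = (\<Sum>b\<in>Basis. \<bar>x \<bullet> b\<bar> * N b)" by (simp add: is_norm_scaleR[OF N])
  also have "\<dots> \<le> (\<Sum>b\<in>Basis. norm x * N b)"
    by (intro sum_mono mult_right_mono is_norm_nonneg[OF N] Basis_le_norm) auto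
  also have "\<dots> \<le> C * norm x" unfolding C_def by (simp add: sum_distrib_left algebra_simps)
  finally show "N x \<le> C * norm x" .
qed

lemma continuous_on_is_norm:
  fixes N :: "'a::euclidean_space \<Rightarrow> real"
  assumes N: "is_norm N"
  shows "continuous_on S N"
proof -
  obtain C where C: "C > 0" "\<And>x. N x \<le> C * norm x" using is_norm_le_norm[OF N] by blast
  have "dist (N x') (N x) \<le> C * dist x' x" for x x'
    using is_norm_reverse_triangle[OF N, of x' x] C(2)[of "x' - x"] by (simp add: dist_norm)
  then have "lipschitz_on C UNIV N" using C by (intro lipschitz_onI) auto
  then show ?thesis by (meson lipschitz_on_continuous_on continuous_on_subset subset_UNIV)
qed

lemma norm_le_is_norm:
  fixes N :: "'a::euclidean_space \<Rightarrow> real"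
  assumes N: "is_norm N"
  obtains D where "D > 0" "\<And>x. norm x \<le> D * N x"
proof -
  have "sphere (0::'a) 1 \<noteq> {}"
    using SOME_Basis norm_Basis by (metis mem_sphere_0 empty_iff)
  then obtain m where m: "m \<in> sphere (0::'a) 1" "\<And>y. y \<in> sphere 0 1 \<Longrightarrow> N m \<le> N y"
    using continuous_attains_inf[OF compact_sphere _ continuous_on_is_norm[OF N]] by blast
  have "m \<noteq> 0" using m(1) by auto
  then have m_pos: "N m > 0" using is_norm_eq_0_iff[OF N, of m] is_norm_nonneg[OF N, of m] by linarith
  have "norm x \<le> (1 / N m) * N x" for x
  proof (cases "x = 0")
    case False
    have "N m \<le> N ((1 / norm x) *\<^sub>R x)" using m(2) False by simp
    also have "\<dots> = N x / norm x" using is_norm_scaleR[OF N] by simp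
    finally show ?thesis using False m_pos by (simp add: field_simps)
  qed (simp add: is_norm_zero[OF N])
  then show ?thesis using m_pos that[of "1 / N m"] by simp
qed

lemma is_norm_matrix_vector_bounded:
  fixes N1 :: "real^'q \<Rightarrow> real" and N2 :: "real^'m \<Rightarrow> real" and M :: "real^'q^'m"
  assumes N1: "is_norm N1" and N2: "is_norm N2"
  obtains B where "B \<ge> 0" "\<And>x. N2 (M *v x) \<le> B * N1 x"
proof -
  obtain C where C: "C > 0" "\<And>x. N2 x \<le> C * norm x" using is_norm_le_norm[OF N2] by blast
  obtain D where D: "D > 0" "\<And>x. norm x \<le> D * N1 x" using norm_le_is_norm[OF N1] by blast
  obtain K where K: "\<And>x. norm (M *v x) \<le> norm x * K" "K > 0"
    using bounded_linear.pos_bounded[OF matrix_vector_mul_bounded_linear[of M]] by blast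
  have "N2 (M *v x) \<le> (C * K * D) * N1 x" for x
  proof -
    have "N2 (M *v x) \<le> C * (norm x * K)" using C K(1)[of x] by (meson mult_left_mono order.trans less_imp_le)
    also have "\<dots> \<le> C * ((D * N1 x) * K)" using C D K by (intro mult_left_mono mult_right_mono) auto
    finally show ?thesis by (simp add: algebra_simps)
  qed
  then show ?thesis using that[of "C * K * D"] C D K by simp
qed

lemma
  fixes N1 :: "real^'q \<Rightarrow> real" and N2 :: "real^'m \<Rightarrow> real" and M :: "real^'q^'m"
  assumes N1: "is_norm N1" and N2: "is_norm N2"
  shows ind_norm_nonneg: "0 \<le> ind_norm N1 N2 M"
    and is_norm_matrix_vector_le: "N2 (M *v x) \<le> ind_norm N1 N2 M * N1 x"
proof -
  obtain B where B: "B \<ge> 0" "\<And>x. N2 (M *v x) \<le> B * N1 x"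
    using is_norm_matrix_vector_bounded[OF N1 N2] by blast
  have "N2 (M *v x) \<le> B" if "N1 x \<le> 1" for x
    using B(2)[of x] mult_left_le[OF that B(1)] by linarith
  then have bdd: "bdd_above ((\<lambda>x. N2 (M *v x)) ` {x. N1 x \<le> 1})" by (intro bdd_aboveI2) auto
  have le_sup: "N2 (M *v x) \<le> ind_norm N1 N2 M" if "N1 x \<le> 1" for x
    unfolding ind_norm_def by (rule cSUP_upper[OF _ bdd]) (use that in simp)
  show "0 \<le> ind_norm N1 N2 M"
    using le_sup[of 0] by (simp add: is_norm_zero[OF N1] is_norm_zero[OF N2])
  show "N2 (M *v x) \<le> ind_norm N1 N2 M * N1 x"
  proof (cases "x = 0")
    case False
    then have pos: "N1 x > 0" using is_norm_eq_0_iff[OF N1, of x] is_norm_nonneg[OF N1, of x] by linarith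
    then have "N2 (M *v ((1 / N1 x) *\<^sub>R x)) \<le> ind_norm N1 N2 M"
      by (intro le_sup) (simp add: is_norm_scaleR[OF N1])
    then show ?thesis using pos by (simp add: matrix_vector_mult_scaleR is_norm_scaleR[OF N2] field_simps)
  qed (simp add: is_norm_zero[OF N1] is_norm_zero[OF N2])
qed

subsection \<open>Tails of the exponential series\<close>

lemma exp_series_sums: "(\<lambda>j. (r::real) ^ j / fact j) sums exp r"
  using exp_converges[of r] by (simp add: divide_inverse mult.commute)

lemma theta_sums: "(\<lambda>j. r ^ (j + k) / fact (j + k)) sums theta r k"
proof -
  have "summable (\<lambda>j. r ^ (j + k) / fact (j + k))"
    using summable_ignore_initial_segment[OF sums_summable[OF exp_series_sums]] .
  then show ?thesis unfolding theta_def by (rule summable_sums)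
qed

lemma theta_eq: "theta r k = exp r - (\<Sum>j<k. r ^ j / fact j)"
  using sums_unique2[OF theta_sums sums_split_initial_segment[OF exp_series_sums]] .

lemma theta_0: "theta r 0 = exp r"
  by (simp add: theta_eq)

lemma theta_nonneg: "0 \<le> r \<Longrightarrow> 0 \<le> theta r k"
  using sums_le[OF _ sums_zero theta_sums] by auto

lemma theta_le_power_mult_exp:
  assumes "0 \<le> r"
  shows "theta r k \<le> r ^ k * exp r"
proof (rule sums_le[OF _ theta_sums sums_mult[OF exp_series_sums]])
  fix j
  have "r ^ (j + k) / fact (j + k) \<le> r ^ (j + k) / fact j"
    using assms by (intro divide_left_mono fact_mono) auto
  then show "r ^ (j + k) / fact (j + k) \<le> r ^ k * (r ^ j / fact j)"
    by (simp add: power_add algebra_simps)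
qed

lemma theta_tendsto_0: "(\<lambda>k. theta r k) \<longlonglongrightarrow> 0"
proof -
  have "(\<lambda>k. exp r - (\<Sum>j<k. r ^ j / fact j)) \<longlonglongrightarrow> exp r - exp r"
    using exp_series_sums[of r] by (intro tendsto_intros) (simp add: sums_def)
  then show ?thesis by (simp add: theta_eq)
qed

lemma bounded_linear_matrix_vector_mult_left: "bounded_linear (\<lambda>M::real^'n^'m. M *v v)"
proof -
  have "linear (\<lambda>M::real^'n^'m. M *v v)"
    by (rule linearI) (simp_all add: matrix_vector_mult_add_rdistrib scaleR_matrix_vector_assoc)
  then show ?thesis by (simp add: linear_conv_bounded_linear)
qed

lemma is_norm_matpow_le:
  fixes N :: "real^'n \<Rightarrow> real" and M :: "real^'n^'n"
  assumes "0 \<le> m" and M: "\<And>x. N (M *v x) \<le> m * N x"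
  shows "N (matpow M j *v v) \<le> m ^ j * N v"
proof (induction j)
  case (Suc j)
  have "N (matpow M (Suc j) *v v) \<le> m * N (matpow M j *v v)"
    using M by (simp add: matrix_vector_mul_assoc[symmetric])
  also have "\<dots> \<le> m * (m ^ j * N v)" using Suc.IH assms(1) by (rule mult_left_mono)
  finally show ?case by (simp add: algebra_simps)
qed simp

lemma norm_matrix_le_columns:
  fixes M :: "real^'n^'m"
  shows "norm M \<le> (\<Sum>i\<in>(UNIV::'m set). \<Sum>j\<in>UNIV. norm (M *v axis j 1))"
proof -
  have "norm M \<le> (\<Sum>i\<in>UNIV. norm (M $ i))"
    unfolding norm_vec_def by (rule L2_set_le_sum) simp
  also have "\<dots> \<le> (\<Sum>i\<in>UNIV. \<Sum>j\<in>UNIV. \<bar>M $ i $ j\<bar>)"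
    by (intro sum_mono norm_le_l1_cart)
  also have "\<dots> \<le> (\<Sum>i\<in>(UNIV::'m set). \<Sum>j\<in>UNIV. norm (M *v axis j 1))"
  proof (intro sum_mono)
    fix i j
    have "(M *v axis j 1) $ i = M $ i $ j"
      by (metis cart_eq_inner_axis matrix_vector_mul_component)
    then show "\<bar>M $ i $ j\<bar> \<le> norm (M *v axis j 1)" by (metis component_le_norm_cart)
  qed
  finally show ?thesis .
qed

lemma summable_mexp_series:
  fixes N :: "real^'n \<Rightarrow> real" and M :: "real^'n^'n"
  assumes N: "is_norm N" and "0 \<le> m" and M: "\<And>x. N (M *v x) \<le> m * N x"
  shows "summable (\<lambda>j. (1 / fact j) *\<^sub>R matpow M j)"
proof -
  obtain D where D: "D > 0" "\<And>x. norm x \<le> D * N x" using norm_le_is_norm[OF N] by blast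
  define K where "K = (\<Sum>i\<in>(UNIV::'n set). \<Sum>j\<in>(UNIV::'n set). D * N (axis j (1::real)))"
  have "norm (matpow M k) \<le> (\<Sum>i\<in>(UNIV::'n set). \<Sum>j\<in>UNIV. norm (matpow M k *v axis j 1))"
    for k by (rule norm_matrix_le_columns)
  also have "\<dots> k \<le> (\<Sum>i\<in>(UNIV::'n set). \<Sum>j\<in>UNIV. D * N (axis j (1::real)) * m ^ k)" for k
  proof (intro sum_mono)
    fix j :: 'n
    have "norm (matpow M k *v axis j 1) \<le> D * (m ^ k * N (axis j 1))"
      using D is_norm_matpow_le[where N=N and M=M, OF assms(2) M, of k "axis j 1"]
      by (meson less_imp_le mult_left_mono order.trans)
    then show "norm (matpow M k *v axis j 1) \<le> D * N (axis j (1::real)) * m ^ k"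
      by (simp add: algebra_simps)
  qed
  finally have "norm (matpow M k) \<le> K * m ^ k" for k
    unfolding K_def by (simp only: sum_distrib_right)
  then have "norm ((1 / fact k) *\<^sub>R matpow M k) \<le> K * (inverse (fact k) * m ^ k)" for k
    by (simp add: divide_inverse mult_left_mono mult.left_commute[of K])
  then show ?thesis
    by (rule summable_comparison_test'[OF summable_mult[OF summable_exp]])
qed

lemma mexp_mult_sums:
  fixes N :: "real^'n \<Rightarrow> real" and M :: "real^'n^'n"
  assumes "is_norm N" and "0 \<le> m" and "\<And>x. N (M *v x) \<le> m * N x"
  shows "(\<lambda>j. (1 / fact j) *\<^sub>R (matpow M j *v v)) sums (mexp M *v v)"
proof -
  have "(\<lambda>j. (1 / fact j) *\<^sub>R matpow M j) sums mexp M"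
    unfolding mexp_def using summable_mexp_series[OF assms] by (rule summable_sums)
  from bounded_linear.sums[OF bounded_linear_matrix_vector_mult_left this, of v] show ?thesis
    by (simp add: scaleR_matrix_vector_assoc)
qed

lemma is_norm_sums_le:
  fixes N :: "'a::euclidean_space \<Rightarrow> real"
  assumes N: "is_norm N" and "g sums s" and "\<And>n. N (\<Sum>j<n. g j) \<le> B"
  shows "N s \<le> B"
proof -
  have "isCont N s" using continuous_on_is_norm[OF N, of UNIV] by (simp add: continuous_on_eq_continuous_at)
  then have "(\<lambda>n. N (\<Sum>j<n. g j)) \<longlonglongrightarrow> N s"
    using assms(2) unfolding sums_def by (rule isCont_tendsto_compose)
  then show ?thesis by (rule LIMSEQ_le_const2) (use assms(3) in auto)
qed

lemma is_norm_mexp_tail_le: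
  fixes N :: "real^'n \<Rightarrow> real" and M :: "real^'n^'n"
  assumes N: "is_norm N" and m: "0 \<le> m" and M: "\<And>x. N (M *v x) \<le> m * N x"
  shows "N (mexp M *v v - (\<Sum>j<k. (1 / fact j) *\<^sub>R (matpow M j *v v))) \<le> theta m k * N v"
proof (rule is_norm_sums_le[OF N sums_split_initial_segment[OF mexp_mult_sums[OF assms]]])
  fix n
  have term_le: "N ((1 / fact j) *\<^sub>R (matpow M j *v v)) \<le> m ^ j / fact j * N v" for j
    using mult_left_mono[OF is_norm_matpow_le[where N=N and M=M, OF m M, of j v], of "1 / fact j"]
    by (simp add: is_norm_scaleR[OF N])
  have "N (\<Sum>j<n. (1 / fact (j + k)) *\<^sub>R (matpow M (j + k) *v v))
      \<le> (\<Sum>j<n. N ((1 / fact (j + k)) *\<^sub>R (matpow M (j + k) *v v)))"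
    by (rule is_norm_sum_le[OF N])
  also have "\<dots> \<le> (\<Sum>j<n. m ^ (j + k) / fact (j + k) * N v)"
    by (intro sum_mono term_le)
  also have "\<dots> = (\<Sum>j<n. m ^ (j + k) / fact (j + k)) * N v"
    by (simp add: sum_distrib_right)
  also have "\<dots> \<le> theta m k * N v"
    using sum_le_suminf[OF sums_summable[OF theta_sums], of "{..<n}" m k] m
    by (intro mult_right_mono is_norm_nonneg[OF N]) (simp_all add: sums_unique[OF theta_sums])
  finally show "N (\<Sum>j<n. (1 / fact (j + k)) *\<^sub>R (matpow M (j + k) *v v)) \<le> theta m k * N v" .
qed

lemma is_norm_scaleR_matrix_vector_le:
  fixes N :: "real^'n \<Rightarrow> real" and A :: "real^'n^'n"
  assumes N: "is_norm N" and "0 \<le> t"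
  shows "N ((t *\<^sub>R A) *v x) \<le> (t * ind_norm N N A) * N x"
  using mult_left_mono[OF is_norm_matrix_vector_le[OF N N, of A x] assms(2)]
  by (simp add: scaleR_matrix_vector_assoc[symmetric] is_norm_scaleR[OF N] assms(2) mult.assoc)

lemma Lpoly_mult_eq: "Lpoly A t k *v v = (\<Sum>j<k. (1 / fact j) *\<^sub>R (matpow (t *\<^sub>R A) j *v v))"
  unfolding Lpoly_def
  by (simp add: linear_sum[OF bounded_linear.linear[OF bounded_linear_matrix_vector_mult_left]]
      scaleR_matrix_vector_assoc)

lemma is_norm_mexp_le:
  fixes N :: "real^'n \<Rightarrow> real" and A :: "real^'n^'n"
  assumes N: "is_norm N" and t: "0 \<le> t"
  shows "N (mexp (t *\<^sub>R A) *v v) \<le> exp (t * ind_norm N N A) * N v"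
  using is_norm_mexp_tail_le[OF N _ is_norm_scaleR_matrix_vector_le[OF N t], where k=0]
    ind_norm_nonneg[OF N N, of A] t
  by (simp add: theta_0)

lemma is_norm_Lpoly_mexp_diff_le:
  fixes N :: "real^'n \<Rightarrow> real" and A :: "real^'n^'n"
  assumes N: "is_norm N" and t: "0 \<le> t" and "2 \<le> k" and r_le_1: "t * ind_norm N N A \<le> 1"
  shows "N (Lpoly A t k *v v - mexp (t *\<^sub>R A) *v v)
    \<le> (t * ind_norm N N A)\<^sup>2 * exp (t * ind_norm N N A) * N v"
proof -
  define r where "r = t * ind_norm N N A"
  have r: "0 \<le> r" "r \<le> 1" using t ind_norm_nonneg[OF N N, of A] r_le_1 unfolding r_def by auto
  have "theta r k \<le> r ^ k * exp r" by (rule theta_le_power_mult_exp[OF r(1)])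
  also have "\<dots> \<le> r\<^sup>2 * exp r" using r \<open>2 \<le> k\<close> by (intro mult_right_mono power_decreasing) auto
  finally have "theta r k * N v \<le> r\<^sup>2 * exp r * N v" by (rule mult_right_mono[OF _ is_norm_nonneg[OF N]])
  moreover have "N (mexp (t *\<^sub>R A) *v v - Lpoly A t k *v v) \<le> theta r k * N v"
    unfolding Lpoly_mult_eq r_def
    using is_norm_mexp_tail_le[OF N _ is_norm_scaleR_matrix_vector_le[OF N t]] r(1) unfolding r_def .
  ultimately show ?thesis
    using is_norm_minus[OF N, of "mexp (t *\<^sub>R A) *v v - Lpoly A t k *v v"] unfolding r_def by simp
qed

lemma lam_tendsto_1: "(\<lambda>k. lam Nn Np A t c G k) \<longlonglongrightarrow> 1"
proof -
  define r where "r = t * ind_norm Nn Nn A"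
  define \<gamma> where "\<gamma> = ind_norm Nn Np (mp_inverse G)"
  have lam_eq: "lam Nn Np A t c G k
      = (1 - exp r * theta r k * \<gamma> * Nn c) / (1 + exp r * theta r k * \<gamma> * ind_norm Np Nn G)" for k
    unfolding lam_def Let_def r_def \<gamma>_def ..
  have "(\<lambda>k. lam Nn Np A t c G k)
      \<longlonglongrightarrow> (1 - exp r * 0 * \<gamma> * Nn c) / (1 + exp r * 0 * \<gamma> * ind_norm Np Nn G)"
    unfolding lam_eq by (intro tendsto_intros theta_tendsto_0) simp
  then show ?thesis by simp
qed

lemma lam_le_1:
  assumes Nn: "is_norm Nn" and Np: "is_norm Np" and "0 \<le> t"
  shows "lam Nn Np A t c G k \<le> 1"
proof -
  define e where "e = exp (t * ind_norm Nn Nn A) * theta (t * ind_norm Nn Nn A) k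
    * ind_norm Nn Np (mp_inverse G)"
  have "0 \<le> e" using assms unfolding e_def by (simp add: ind_norm_nonneg theta_nonneg)
  then have "0 \<le> e * Nn c" "0 \<le> e * ind_norm Np Nn G"
    by (simp_all add: is_norm_nonneg[OF Nn] ind_norm_nonneg[OF Np Nn])
  then show ?thesis
    unfolding lam_def Let_def e_def[symmetric] by (intro divide_le_eq_1_pos[THEN iffD2]) auto
qed

lemma
  assumes "\<epsilon> < 1"
  shows kappa_ge_2: "2 \<le> kappa Nn Np A t c G \<epsilon>"
    and lam_kappa_gt: "\<epsilon> < lam Nn Np A t c G (kappa Nn Np A t c G \<epsilon>)"
proof -
  have "eventually (\<lambda>k. max (kmin A t) 2 \<le> k \<and> \<epsilon> < lam Nn Np A t c G k) sequentially"
    using eventually_ge_at_top order_tendstoD(1)[OF lam_tendsto_1 assms] by (rule eventually_conj)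
  then have "\<exists>k. max (kmin A t) 2 \<le> k \<and> \<epsilon> < lam Nn Np A t c G k"
    using eventually_sequentially by auto
  from LeastI_ex[OF this] show "2 \<le> kappa Nn Np A t c G \<epsilon>"
    and "\<epsilon> < lam Nn Np A t c G (kappa Nn Np A t c G \<epsilon>)"
    unfolding kappa_def by auto
qed

subsection \<open>Hausdorff distance of images of the affine ball\<close>

lemma hdist_le:
  assumes N: "is_norm N" and "X \<noteq> {}" and "Y \<noteq> {}"
    and X: "\<And>x. x \<in> X \<Longrightarrow> \<exists>y\<in>Y. N (x - y) \<le> B"
    and Y: "\<And>y. y \<in> Y \<Longrightarrow> \<exists>x\<in>X. N (x - y) \<le> B"
  shows "hdist N X Y \<le> B"
proof -
  have "bdd_below ((\<lambda>y. N (x - y)) ` S)" "bdd_below ((\<lambda>x. N (x - y)) ` S)" for x y S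
    by (rule bdd_belowI2, rule is_norm_nonneg[OF N])+
  then have INF_le: "(INF y\<in>S. f y) \<le> B" if "f = (\<lambda>y. N (x - y)) \<or> f = (\<lambda>x. N (x - y))"
    and "\<exists>s\<in>S. f s \<le> B" for f S x y
    using that cINF_lower[of f S] by (metis order.trans)
  have "(INF y\<in>Y. N (x - y)) \<le> B" if "x \<in> X" for x
    using X[OF that] by (intro INF_le[where x = x]) auto
  moreover have "(INF x\<in>X. N (x - y)) \<le> B" if "y \<in> Y" for y
    using Y[OF that] by (intro INF_le[where y = y]) auto
  ultimately show ?thesis
    unfolding hdist_def using assms(2,3) by (simp add: cSUP_least)
qed

lemma zero_in_unit_ball: "is_norm N \<Longrightarrow> 0 \<in> unit_ball N"
  unfolding unit_ball_def by (simp add: is_norm_zero)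

lemma scaleR_in_unit_ball:
  assumes N: "is_norm N" and "\<bar>a\<bar> \<le> 1" and "u \<in> unit_ball N"
  shows "a *\<^sub>R u \<in> unit_ball N"
  using assms mult_le_one[of "\<bar>a\<bar>" "N u"] is_norm_nonneg[OF N, of u]
  unfolding unit_ball_def by (simp add: is_norm_scaleR[OF N])

lemma is_norm_affine_le_set_norm:
  fixes Nn :: "real^'n \<Rightarrow> real" and Np :: "real^'p \<Rightarrow> real" and G :: "real^'p^'n"
  assumes Nn: "is_norm Nn" and Np: "is_norm Np" and u: "u \<in> unit_ball Np"
  shows "Nn (c + G *v u) \<le> set_norm Nn ((\<lambda>u. c + G *v u) ` unit_ball Np)"
  unfolding set_norm_def
proof (rule cSUP_upper)
  have "Nn (c + G *v v) \<le> Nn c + ind_norm Np Nn G" if "v \<in> unit_ball Np" for v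
  proof -
    have "Nn (c + G *v v) \<le> Nn c + ind_norm Np Nn G * Np v"
      using is_norm_triangle[OF Nn] is_norm_matrix_vector_le[OF Np Nn] by (meson add_left_mono order.trans)
    also have "\<dots> \<le> Nn c + ind_norm Np Nn G"
      using that ind_norm_nonneg[OF Np Nn, of G] unfolding unit_ball_def by (simp add: mult_left_le)
    finally show ?thesis .
  qed
  then show "bdd_above (Nn ` (\<lambda>u. c + G *v u) ` unit_ball Np)" by (intro bdd_aboveI2) auto
qed (use u in blast)

lemma
  fixes Nn :: "real^'n \<Rightarrow> real" and Np :: "real^'p \<Rightarrow> real" and G :: "real^'p^'n"
  assumes Nn: "is_norm Nn" and Np: "is_norm Np"
  shows is_norm_center_le_set_norm: "Nn c \<le> set_norm Nn ((\<lambda>u. c + G *v u) ` unit_ball Np)"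
    and set_norm_affine_ball_nonneg: "0 \<le> set_norm Nn ((\<lambda>u. c + G *v u) ` unit_ball Np)"
  using is_norm_affine_le_set_norm[OF Nn Np zero_in_unit_ball[OF Np], where c = c and G = G]
    is_norm_nonneg[OF Nn, of c] by simp_all

lemma is_norm_generator_le_set_norm:
  fixes Nn :: "real^'n \<Rightarrow> real" and Np :: "real^'p \<Rightarrow> real" and G :: "real^'p^'n"
  assumes Nn: "is_norm Nn" and Np: "is_norm Np" and u: "u \<in> unit_ball Np"
  shows "Nn (G *v u) \<le> 2 * set_norm Nn ((\<lambda>u. c + G *v u) ` unit_ball Np)"
  using is_norm_diff_le[OF Nn, of "c + G *v u" c]
    is_norm_affine_le_set_norm[OF Nn Np u, where c = c and G = G]
    is_norm_center_le_set_norm[OF Nn Np, where c = c and G = G] by simp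

lemma is_norm_shrunk_affine_le_set_norm:
  fixes Nn :: "real^'n \<Rightarrow> real" and Np :: "real^'p \<Rightarrow> real" and G :: "real^'p^'n"
  assumes Nn: "is_norm Nn" and Np: "is_norm Np" and u: "u \<in> unit_ball Np"
    and "0 \<le> l" and "l \<le> 1"
  shows "Nn (c + l *\<^sub>R (G *v u)) \<le> set_norm Nn ((\<lambda>u. c + G *v u) ` unit_ball Np)"
    (is "_ \<le> ?R")
proof -
  have "c + l *\<^sub>R (G *v u) = (1 - l) *\<^sub>R c + l *\<^sub>R (c + G *v u)" by (simp add: algebra_simps)
  then have "Nn (c + l *\<^sub>R (G *v u)) \<le> Nn ((1 - l) *\<^sub>R c) + Nn (l *\<^sub>R (c + G *v u))"
    using is_norm_triangle[OF Nn] by simp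
  also have "\<dots> = (1 - l) * Nn c + l * Nn (c + G *v u)"
    using assms(4,5) by (simp add: is_norm_scaleR[OF Nn])
  also have "\<dots> \<le> (1 - l) * ?R + l * ?R"
    using assms(4,5) is_norm_center_le_set_norm[OF Nn Np] is_norm_affine_le_set_norm[OF Nn Np u]
    by (intro add_mono mult_left_mono) auto
  finally show ?thesis by (simp add: algebra_simps)
qed

lemma hdist_linear_images_le:
  fixes Nn :: "real^'n \<Rightarrow> real" and Np :: "real^'p \<Rightarrow> real" and Nm :: "real^'m \<Rightarrow> real"
    and G :: "real^'p^'n" and L E :: "real^'n^'m"
  assumes Nn: "is_norm Nn" and Np: "is_norm Np" and Nm: "is_norm Nm"
    and l: "0 \<le> l" "l \<le> 1" and "0 \<le> \<delta>" and "0 \<le> \<rho>"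
    and L: "\<And>w. Nm (L *v w - E *v w) \<le> \<delta> * Nn w"
    and E: "\<And>w. Nm (E *v w) \<le> \<rho> * Nn w"
  shows "hdist Nm ((\<lambda>u. L *v (c + l *\<^sub>R (G *v u))) ` unit_ball Np)
      ((\<lambda>x. E *v x) ` ((\<lambda>u. c + G *v u) ` unit_ball Np))
    \<le> (\<delta> + 2 * (1 - l) * \<rho>) * set_norm Nn ((\<lambda>u. c + G *v u) ` unit_ball Np)"
    (is "hdist _ ?X ((\<lambda>x. E *v x) ` ?\<Omega>) \<le> ?B * ?R")
proof (rule hdist_le[OF Nm])
  have L_le: "Nm (L *v (c + l *\<^sub>R (G *v u)) - E *v (c + l *\<^sub>R (G *v u))) \<le> \<delta> * ?R"
    if "u \<in> unit_ball Np" for u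
    using L mult_left_mono[OF is_norm_shrunk_affine_le_set_norm[OF Nn Np that l] \<open>0 \<le> \<delta>\<close>]
    by (rule order.trans)
  show "?X \<noteq> {}" "(\<lambda>x. E *v x) ` ?\<Omega> \<noteq> {}" using zero_in_unit_ball[OF Np] by blast+
  show "\<exists>y\<in>(\<lambda>x. E *v x) ` ?\<Omega>. Nm (x - y) \<le> ?B * ?R" if "x \<in> ?X" for x
  proof -
    obtain u where u: "u \<in> unit_ball Np" and x: "x = L *v (c + l *\<^sub>R (G *v u))"
      using \<open>x \<in> ?X\<close> by blast
    have "c + l *\<^sub>R (G *v u) = c + G *v (l *\<^sub>R u)" by (simp add: matrix_vector_mult_scaleR)
    then have "E *v (c + l *\<^sub>R (G *v u)) \<in> (\<lambda>x. E *v x) ` ?\<Omega>"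
      using scaleR_in_unit_ball[OF Np _ u, of l] l by auto
    moreover have "\<delta> * ?R \<le> ?B * ?R"
      using set_norm_affine_ball_nonneg[OF Nn Np] \<open>0 \<le> \<rho>\<close> l by (intro mult_right_mono) auto
    ultimately show ?thesis using L_le[OF u] unfolding x by (meson order.trans)
  qed
  show "\<exists>x\<in>?X. Nm (x - y) \<le> ?B * ?R" if "y \<in> (\<lambda>x. E *v x) ` ?\<Omega>" for y
  proof -
    obtain u where u: "u \<in> unit_ball Np" and y: "y = E *v (c + G *v u)"
      using \<open>y \<in> (\<lambda>x. E *v x) ` ?\<Omega>\<close> by blast
    define w where "w = c + l *\<^sub>R (G *v u)"
    have "(1 - l) * Nn (G *v u) \<le> (1 - l) * (2 * ?R)"
      using is_norm_generator_le_set_norm[OF Nn Np u] l by (simp add: mult_left_mono)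
    then have E_le: "Nm (E *v ((l - 1) *\<^sub>R (G *v u))) \<le> \<rho> * ((1 - l) * (2 * ?R))"
      using E[of "(l - 1) *\<^sub>R (G *v u)"] mult_left_mono[OF _ \<open>0 \<le> \<rho>\<close>] l
      by (simp add: is_norm_scaleR[OF Nn]) (meson order.trans)
    have "L *v w - y = (L *v w - E *v w) + E *v ((l - 1) *\<^sub>R (G *v u))"
      unfolding y w_def by (simp add: algebra_simps matrix_vector_mult_scaleR)
    then have "Nm (L *v w - y) \<le> \<delta> * ?R + \<rho> * ((1 - l) * (2 * ?R))"
      using is_norm_triangle[OF Nm] L_le[OF u] E_le unfolding w_def by (smt (verit, best))
    moreover have "L *v w \<in> ?X" unfolding w_def using u by blast
    ultimately show ?thesis by (intro bexI[of _ "L *v w"]) (simp_all add: algebra_simps)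
  qed
qed

theorem lemma12:
  fixes Nn :: "real^'n \<Rightarrow> real" and Np :: "real^'p \<Rightarrow> real"
    and A :: "real^'n^'n" and c :: "real^'n" and G :: "real^'p^'n"
    and T t \<epsilon> :: real
  assumes "is_norm Nn" and "is_norm Np"
    and "rank G = CARD('n)"
    and "T > 0"
    and "0 \<le> \<epsilon>" and "\<epsilon> < 1"
    and "0 \<le> t" and "t \<le> T"
    and "t * ind_norm Nn Nn A \<le> 1"
  shows "hdist Nn (Hset Nn Np A t c G \<epsilon>)
             ((\<lambda>x. mexp (t *\<^sub>R A) *v x) ` ((\<lambda>u. c + G *v u) ` unit_ball Np))
         \<le> (2 * (1 - \<epsilon>) + (t * ind_norm Nn Nn A)^2) * exp (T * ind_norm Nn Nn A)
             * set_norm Nn ((\<lambda>u. c + G *v u) ` unit_ball Np)"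
proof -
  note Nn = assms(1) and Np = assms(2)
  define r where "r = t * ind_norm Nn Nn A"
  define k where "k = kappa Nn Np A t c G \<epsilon>"
  define l where "l = lam Nn Np A t c G k"
  define R where "R = set_norm Nn ((\<lambda>u. c + G *v u) ` unit_ball Np)"
  have l: "\<epsilon> < l" "l \<le> 1"
    unfolding l_def k_def using lam_kappa_gt[OF assms(6)] lam_le_1[OF Nn Np assms(7)] by auto
  have "0 \<le> R" unfolding R_def by (rule set_norm_affine_ball_nonneg[OF Nn Np])
  have "exp r \<le> exp (T * ind_norm Nn Nn A)"
    using assms(8) ind_norm_nonneg[OF Nn Nn, of A] unfolding r_def by (simp add: mult_right_mono)
  then have "(r\<^sup>2 + 2 * (1 - l)) * exp r * R \<le> (2 * (1 - \<epsilon>) + r\<^sup>2) * exp (T * ind_norm Nn Nn A) * R"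
    using l \<open>0 \<le> R\<close> by (intro mult_right_mono mult_mono) auto
  moreover have "hdist Nn (Hset Nn Np A t c G \<epsilon>)
      ((\<lambda>x. mexp (t *\<^sub>R A) *v x) ` ((\<lambda>u. c + G *v u) ` unit_ball Np))
    \<le> (r\<^sup>2 * exp r + 2 * (1 - l) * exp r) * R"
    unfolding Hset_def Let_def k_def[symmetric] l_def[symmetric] R_def
    using hdist_linear_images_le[OF Nn Np Nn _ l(2) _ _
        is_norm_Lpoly_mexp_diff_le[OF Nn assms(7) kappa_ge_2[OF assms(6)] assms(9)]
        is_norm_mexp_le[OF Nn assms(7)]] l assms(5)
    unfolding r_def k_def by simp
  ultimately show ?thesis unfolding r_def R_def by (simp add: algebra_simps)
qed

end
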